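(* Let $k=\mathbb R$ or $\mathbb C$, let $(V,g)$ be an inner product vector space over $k$, let $f\in\operatorname{End}_k(V)$, and let $\mathcal H_f=\{H_i\}_{i\in I}$ be a family of finite-dimensional $f$-invariant subspaces with $V=\bigoplus_{i\in I}H_i$; write $f_i=f|_{H_i}$ and $\mathcal H_f^\perp=\bigoplus_{i\in I}[\operatorname{Im} f_i]_i^\perp$. Then $\mathcal H_f^\perp=[\operatorname{Im} f]^\perp$ if and only if $[\operatorname{Im} f_i]_i^\perp\subseteq\big[\sum_{j\ne i}\operatorname{Im} f_j\big]^\perp$ for every $i\in I$.
   Context: An inner product is linear in the first argument, conjugate-symmetric and positive definite. $V=\bigoplus_{i\in I}H_i$ means the natural map $\bigoplus H_i\to V$ is an isomorphism. For a subspace $W\subseteq V$, $W^\perp=\{v\in V:g(w,v)=0\ \forall w\in W\}$; for a subspace $W\subseteq H_i$, $[W]_i^\perp=\{v\in H_i:g(w,v)=0\ \forall w\in W\}$. *)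

theory Defs
  imports "HOL-Analysis.Analysis"
begin

definition is_inner_product ::
  "('k::real_field \<Rightarrow> 'v::ab_group_add \<Rightarrow> 'v) \<Rightarrow> ('k \<Rightarrow> 'k) \<Rightarrow> ('v \<Rightarrow> 'v \<Rightarrow> 'k) \<Rightarrow> bool" where
  "is_inner_product sc conjg g \<longleftrightarrow>
     (\<forall>u v w. g (u + v) w = g u w + g v w) \<and>
     (\<forall>a u w. g (sc a u) w = a * g u w) \<and>
     (\<forall>u w. g u w = conjg (g w u)) \<and>
     (\<forall>v. v \<noteq> 0 \<longrightarrow> (\<exists>r::real. r > 0 \<and> g v v = of_real r))"

definition fin_dim_subspace :: "('k::field \<Rightarrow> 'v::ab_group_add \<Rightarrow> 'v) \<Rightarrow> 'v set \<Rightarrow> bool" where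
  "fin_dim_subspace sc W \<longleftrightarrow>
     module.subspace sc W \<and> (\<exists>B. finite B \<and> B \<subseteq> W \<and> module.span sc B = W)"

definition internal_direct_sum :: "('k::field \<Rightarrow> 'v::ab_group_add \<Rightarrow> 'v) \<Rightarrow> 'i set \<Rightarrow> ('i \<Rightarrow> 'v set) \<Rightarrow> bool" where
  "internal_direct_sum sc I H \<longleftrightarrow>
     (\<forall>i\<in>I. module.subspace sc (H i)) \<and>
     (\<forall>v. \<exists>!h. (\<forall>i\<in>I. h i \<in> H i) \<and> (\<forall>i. i \<notin> I \<longrightarrow> h i = 0) \<and>
              finite {i. h i \<noteq> 0} \<and> v = (\<Sum>i\<in>{i. h i \<noteq> 0}. h i))"

text \<open>W^\<perp> relative to a subspace X (X = UNIV gives W^\<perp> in V, X = H i gives [W]_i^\<perp>).\<close>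
definition orth_in :: "('v \<Rightarrow> 'v \<Rightarrow> 'k::zero) \<Rightarrow> 'v set \<Rightarrow> 'v set \<Rightarrow> 'v set" where
  "orth_in g X W = {v \<in> X. \<forall>w\<in>W. g w v = 0}"

end

theory Submission imports Defs begin

text \<open>Write K_i for the orthogonal complement of Im f_i inside H_i. Since Im f is spanned by
  the Im f_j, the condition on the right says precisely that every K_i is orthogonal to Im f,
  i.e. that the span of the K_i lies in [Im f]^perp. That inclusion is already an equality:
  decompose v in [Im f]^perp as a finite sum of h_i in H_i and split each h_i = f y_i + k_i with
  k_i in K_i, by orthogonal projection of h_i onto the finite-dimensional space Im f_i. Then
  a = f (sum y_i) = v - sum k_i lies in Im f and is orthogonal to Im f, so a = 0 and
  v = sum k_i.\<close>

lemma internal_direct_sumE: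
  assumes "internal_direct_sum sc I H"
  obtains h S where "finite S" "S \<subseteq> I" "\<And>i. i \<in> S \<Longrightarrow> h i \<in> H i" "v = sum h S"
proof -
  obtain h where "\<forall>i\<in>I. h i \<in> H i" "\<forall>i. i \<notin> I \<longrightarrow> h i = 0" "finite {i. h i \<noteq> 0}"
      "v = sum h {i. h i \<noteq> 0}"
    using assms unfolding internal_direct_sum_def by metis
  then show thesis by (intro that[of "{i. h i \<noteq> 0}" h]) auto
qed

lemma (in vector_space) span_Union_internal_direct_sum:
  assumes "internal_direct_sum scale I H"
  shows "span (\<Union>i\<in>I. H i) = UNIV"
proof -
  have "v \<in> span (\<Union>i\<in>I. H i)" for v
  proof -
    obtain h S where "S \<subseteq> I" "\<And>i. i \<in> S \<Longrightarrow> h i \<in> H i" "v = sum h S"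
      using internal_direct_sumE[OF assms] by metis
    moreover from this have "h i \<in> span (\<Union>i\<in>I. H i)" if "i \<in> S" for i
      using that by (meson UN_I span_base subsetD)
    ultimately show ?thesis using span_sum by metis
  qed
  then show ?thesis by blast
qed

lemma (in vector_space) range_eq_span_images_internal_direct_sum:
  assumes "Vector_Spaces.linear scale scale f" and "internal_direct_sum scale I H"
  shows "range f = span (\<Union>i\<in>I. f ` H i)"
proof -
  interpret module_hom scale scale f
    using assms(1) module_hom_iff_linear by blast
  show ?thesis
    using span_image[of "\<Union>i\<in>I. H i"] span_Union_internal_direct_sum[OF assms(2)]
    by (simp add: image_UN)
qed

locale inner_product_space = vector_space scale
  for scale :: "'k::real_field \<Rightarrow> 'v::ab_group_add \<Rightarrow> 'v" +
  fixes g :: "'v \<Rightarrow> 'v \<Rightarrow> 'k" and conjg :: "'k \<Rightarrow> 'k"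
  assumes inner_product: "is_inner_product scale conjg g"
begin

lemma g_add_left: "g (u + v) w = g u w + g v w"
  using inner_product unfolding is_inner_product_def by blast

lemma g_scale_left: "g (scale a u) w = a * g u w"
  using inner_product unfolding is_inner_product_def by blast

lemma g_conj_commute: "g u w = conjg (g w u)"
  using inner_product unfolding is_inner_product_def by blast

lemma g_self_nonzero: "v \<noteq> 0 \<Longrightarrow> g v v \<noteq> 0"
proof -
  assume "v \<noteq> 0"
  then obtain r :: real where "r > 0" "g v v = of_real r"
    using inner_product unfolding is_inner_product_def by blast
  then show ?thesis by simp
qed

lemma g_zero_left: "g 0 w = 0"
  using g_add_left[of 0 0 w] by simp

lemma g_diff_left: "g (u - v) w = g u w - g v w"
  using g_add_left[of "u - v" v w] by (simp add: algebra_simps)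

lemma conjg_zero: "conjg 0 = 0"
  by (metis g_conj_commute g_zero_left)

lemma g_eq_0_commute: "g u w = 0 \<longleftrightarrow> g w u = 0"
  by (metis g_conj_commute conjg_zero)

lemma subspace_orth_left: "subspace {u. g u w = 0}"
  by (rule subspaceI) (auto simp: g_zero_left g_add_left g_scale_left)

lemma subspace_orth_right: "subspace {u. g w u = 0}"
  using subspace_orth_left[of w] by (simp add: g_eq_0_commute)

lemma subspace_orth_in_UNIV: "subspace (orth_in g UNIV S)"
proof -
  have "orth_in g UNIV S = (\<Inter>w\<in>S. {u. g w u = 0})"
    unfolding orth_in_def by auto
  then show ?thesis
    using subspace_orth_right subspace_Int[of S "\<lambda>w. {u. g w u = 0}"] by simp
qed

lemma orth_in_UNIV_span: "orth_in g UNIV (span S) = orth_in g UNIV S"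
proof
  show "orth_in g UNIV (span S) \<subseteq> orth_in g UNIV S"
    unfolding orth_in_def using span_base by blast
  show "orth_in g UNIV S \<subseteq> orth_in g UNIV (span S)"
  proof
    fix v assume "v \<in> orth_in g UNIV S"
    then have "span S \<subseteq> {u. g u v = 0}"
      using span_minimal[OF _ subspace_orth_left] unfolding orth_in_def by blast
    then show "v \<in> orth_in g UNIV (span S)"
      unfolding orth_in_def by blast
  qed
qed

text \<open>Gram--Schmidt step: project onto span B, then correct along the component of the new
  vector b that is orthogonal to span B.\<close>
lemma orthogonal_projection_span:
  "finite B \<Longrightarrow> \<exists>a\<in>span B. \<forall>w\<in>span B. g (v - a) w = 0"
proof (induction B arbitrary: v rule: finite_induct)
  case empty
  then show ?case using g_zero_left g_eq_0_commute by auto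
next
  case (insert b B)
  obtain p where p: "p \<in> span B" "\<forall>w\<in>span B. g (b - p) w = 0"
    using insert.IH by blast
  obtain a where a: "a \<in> span B" "\<forall>w\<in>span B. g (v - a) w = 0"
    using insert.IH by blast
  have span_B: "span B \<subseteq> span (insert b B)"
    by (simp add: span_mono subset_insertI)
  define b' where "b' = b - p"
  show ?case
  proof (cases "b' = 0")
    case True
    then have "b \<in> span B" using p b'_def by simp
    then show ?thesis using a span_redundant by auto
  next
    case False
    define a' where "a' = a + scale (g (v - a) b' / g b' b') b'"
    have "b' \<in> span (insert b B)"
      unfolding b'_def using p span_B by (meson insertI1 span_base span_diff subsetD)
    then have a'_span: "a' \<in> span (insert b B)"
      unfolding a'_def using a span_B by (meson span_add span_scale subsetD)
    have a'_orth: "g (v - a') w = g (v - a) w - g (v - a) b' / g b' b' * g b' w" for w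
      unfolding a'_def by (simp add: diff_add_eq_diff_diff_swap g_diff_left g_scale_left)
    let ?Z = "{w. g (v - a') w = 0}"
    have B_Z: "span B \<subseteq> ?Z" using a'_orth a p b'_def by auto
    moreover have "b' \<in> ?Z" using a'_orth g_self_nonzero[OF False] by simp
    ultimately have "b' + p \<in> ?Z"
      using p(1) subspace_add[OF subspace_orth_right] by blast
    then have "insert b B \<subseteq> ?Z"
      using B_Z span_superset by (auto simp: b'_def)
    then have "span (insert b B) \<subseteq> ?Z"
      using subspace_orth_right span_minimal by blast
    then show ?thesis using a'_span by blast
  qed
qed

lemma ex_image_plus_orth_in:
  assumes "Vector_Spaces.linear scale scale f" and "fin_dim_subspace scale W"
    and "f ` W \<subseteq> W" and "h \<in> W"
  shows "\<exists>y\<in>W. h - f y \<in> orth_in g W (f ` W)"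
proof -
  interpret module_hom scale scale f
    using assms(1) module_hom_iff_linear by blast
  obtain B where B: "finite B" "span B = W" and "subspace W"
    using assms(2) unfolding fin_dim_subspace_def by blast
  then have "span (f ` B) = f ` W"
    using span_image by simp
  then obtain y where "y \<in> W" "\<forall>w\<in>f ` W. g (h - f y) w = 0"
    using orthogonal_projection_span[of "f ` B" h] B(1) by auto
  moreover have "h - f y \<in> W"
    using \<open>y \<in> W\<close> assms(3,4) \<open>subspace W\<close> subspace_diff by blast
  ultimately show ?thesis
    unfolding orth_in_def using g_eq_0_commute by blast
qed

lemma orth_images_subset_orth_range_iff:
  assumes "Vector_Spaces.linear scale scale f" and "internal_direct_sum scale I H"
    and "i \<in> I"
  shows "orth_in g (H i) (f ` H i) \<subseteq> orth_in g UNIV (range f) \<longleftrightarrow>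
    orth_in g (H i) (f ` H i) \<subseteq> orth_in g UNIV (span (\<Union>j\<in>I - {i}. f ` H j))"
proof -
  have "orth_in g UNIV (range f) = orth_in g UNIV (\<Union>j\<in>I. f ` H j)"
    using range_eq_span_images_internal_direct_sum[OF assms(1,2)] by (simp add: orth_in_UNIV_span)
  also have "\<dots> = orth_in g UNIV (f ` H i) \<inter> orth_in g UNIV (\<Union>j\<in>I - {i}. f ` H j)"
    using assms(3) unfolding orth_in_def by blast
  finally have "orth_in g UNIV (range f) =
      orth_in g UNIV (f ` H i) \<inter> orth_in g UNIV (span (\<Union>j\<in>I - {i}. f ` H j))"
    by (simp add: orth_in_UNIV_span)
  moreover have "orth_in g (H i) (f ` H i) \<subseteq> orth_in g UNIV (f ` H i)"
    unfolding orth_in_def by blast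
  ultimately show ?thesis by blast
qed

lemma orth_range_subset_span_orth_images:
  assumes lin: "Vector_Spaces.linear scale scale f"
    and H: "\<forall>i\<in>I. fin_dim_subspace scale (H i) \<and> f ` H i \<subseteq> H i"
    and ds: "internal_direct_sum scale I H"
    and orth: "\<And>i. i \<in> I \<Longrightarrow> orth_in g (H i) (f ` H i) \<subseteq> orth_in g UNIV (range f)"
  shows "orth_in g UNIV (range f) \<subseteq> span (\<Union>i\<in>I. orth_in g (H i) (f ` H i))"
proof
  interpret module_hom scale scale f
    using lin module_hom_iff_linear by blast
  fix v assume v: "v \<in> orth_in g UNIV (range f)"
  obtain h S where S: "finite S" "S \<subseteq> I" "\<And>i. i \<in> S \<Longrightarrow> h i \<in> H i" "v = sum h S"
    using internal_direct_sumE[OF ds] by metis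
  have "\<forall>i\<in>S. \<exists>y\<in>H i. h i - f y \<in> orth_in g (H i) (f ` H i)"
    using S H ex_image_plus_orth_in[OF lin] by blast
  then obtain y where y: "\<And>i. i \<in> S \<Longrightarrow> h i - f (y i) \<in> orth_in g (H i) (f ` H i)"
    by metis
  define k where "k i = h i - f (y i)" for i
  define a where "a = f (sum y S)"
  have a_eq: "a = v - sum k S"
    unfolding a_def k_def S(4) sum by (simp add: sum_subtractf)
  have "g a v = 0"
    using v unfolding orth_in_def a_def by blast
  moreover have "g a (sum k S) = 0"
  proof -
    have "k i \<in> {u. g a u = 0}" if "i \<in> S" for i
      using y[OF that] orth S(2) that unfolding k_def a_def orth_in_def by blast
    then show ?thesis using subspace_sum[OF subspace_orth_right] by blast
  qed
  ultimately have "g a a = 0"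
    using a_eq subspace_diff[OF subspace_orth_right] by fastforce
  then have "a = 0"
    using g_self_nonzero[of a] by auto
  then have "v = sum k S"
    using a_eq by simp
  also have "\<dots> \<in> span (\<Union>i\<in>I. orth_in g (H i) (f ` H i))"
    using y S(2) unfolding k_def by (intro span_sum span_base) blast
  finally show "v \<in> span (\<Union>i\<in>I. orth_in g (H i) (f ` H i))" .
qed

theorem span_orth_images_eq_orth_range_iff:
  assumes lin: "Vector_Spaces.linear scale scale f"
    and H: "\<forall>i\<in>I. fin_dim_subspace scale (H i) \<and> f ` H i \<subseteq> H i"
    and ds: "internal_direct_sum scale I H"
  shows "span (\<Union>i\<in>I. orth_in g (H i) (f ` H i)) = orth_in g UNIV (range f) \<longleftrightarrow>
    (\<forall>i\<in>I. orth_in g (H i) (f ` H i) \<subseteq> orth_in g UNIV (span (\<Union>j\<in>I - {i}. f ` H j)))"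
proof -
  let ?K = "\<lambda>i. orth_in g (H i) (f ` H i)" and ?O = "orth_in g UNIV (range f)"
  have "span (\<Union>i\<in>I. ?K i) = ?O \<longleftrightarrow> (\<forall>i\<in>I. ?K i \<subseteq> ?O)"
  proof
    assume eq: "span (\<Union>i\<in>I. ?K i) = ?O"
    show "\<forall>i\<in>I. ?K i \<subseteq> ?O"
    proof
      fix i assume "i \<in> I"
      then have "?K i \<subseteq> span (\<Union>i\<in>I. ?K i)"
        using span_superset[of "\<Union>i\<in>I. ?K i"] by blast
      then show "?K i \<subseteq> ?O" by (simp only: eq)
    qed
  next
    assume orth: "\<forall>i\<in>I. ?K i \<subseteq> ?O"
    show "span (\<Union>i\<in>I. ?K i) = ?O"
    proof (rule subset_antisym)
      show "span (\<Union>i\<in>I. ?K i) \<subseteq> ?O"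
        using orth by (intro span_minimal subspace_orth_in_UNIV UN_least) blast
      show "?O \<subseteq> span (\<Union>i\<in>I. ?K i)"
        using orth by (intro orth_range_subset_span_orth_images[OF lin H ds]) blast
    qed
  qed
  also have "\<dots> \<longleftrightarrow> (\<forall>i\<in>I. ?K i \<subseteq> orth_in g UNIV (span (\<Union>j\<in>I - {i}. f ` H j)))"
    using orth_images_subset_orth_range_iff[OF lin ds] by (intro ball_cong) simp_all
  finally show ?thesis .
qed

end

theorem lemma3p18:
  shows
  "(\<forall>(sc :: real \<Rightarrow> 'v::ab_group_add \<Rightarrow> 'v) g f (I :: 'i set) H.
      vector_space sc \<longrightarrow> is_inner_product sc id g \<longrightarrow>
      Vector_Spaces.linear sc sc f \<longrightarrow>
      (\<forall>i\<in>I. fin_dim_subspace sc (H i) \<and> f ` H i \<subseteq> H i) \<longrightarrow>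
      internal_direct_sum sc I H \<longrightarrow>
      (module.span sc (\<Union>i\<in>I. orth_in g (H i) (f ` H i)) = orth_in g UNIV (range f)
       \<longleftrightarrow> (\<forall>i\<in>I. orth_in g (H i) (f ` H i)
               \<subseteq> orth_in g UNIV (module.span sc (\<Union>j\<in>I - {i}. f ` H j)))))
   \<and>
   (\<forall>(sc :: complex \<Rightarrow> 'w::ab_group_add \<Rightarrow> 'w) g f (I :: 'j set) H.
      vector_space sc \<longrightarrow> is_inner_product sc cnj g \<longrightarrow>
      Vector_Spaces.linear sc sc f \<longrightarrow>
      (\<forall>i\<in>I. fin_dim_subspace sc (H i) \<and> f ` H i \<subseteq> H i) \<longrightarrow>
      internal_direct_sum sc I H \<longrightarrow>
      (module.span sc (\<Union>i\<in>I. orth_in g (H i) (f ` H i)) = orth_in g UNIV (range f)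
       \<longleftrightarrow> (\<forall>i\<in>I. orth_in g (H i) (f ` H i)
               \<subseteq> orth_in g UNIV (module.span sc (\<Union>j\<in>I - {i}. f ` H j)))))"
  by (intro conjI allI impI inner_product_space.span_orth_images_eq_orth_range_iff)
    (simp_all add: inner_product_space_def inner_product_space_axioms_def)

end
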